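(* Let $\alpha>-2$ and let $N\ge N_\alpha$ be an integer. Then $$u_{\beta_0}(r)\le-(4+\alpha)\ln r+\ln\big[2(4+\alpha)(N-2)(N-4)\big]\quad\text{for all }r>0,$$ and consequently $|x|^\alpha e^{u_\beta(x)}\le\frac{N^2(N-4)^2}{16|x|^4}$ for all $x\in\mathbb{R}^N\setminus\{0\}$ and all $\beta\le\beta_0$.
   Context: Fix an integer $N\ge3$ and $\alpha>-2$. For $\beta\in\mathbb{R}$, $u_\beta$ denotes the radial function $u_\beta(x)=u_\beta(r)$, $r=|x|$, solving the initial value problem $\Delta^2u=|x|^\alpha e^u$ for $r\in[0,R_\beta)$, $u'(0)=u'''(0)=0$, $u(0)=0$, $\Delta u(0)=\beta$, where $\Delta u=u''+\frac{N-1}{r}u'$ is the radial Laplacian in $\mathbb{R}^N$ and $[0,R_\beta)$ is the maximal interval of existence. $\beta_0:=\sup\{\beta\in\mathbb{R}:R_\beta=\infty\}$; it is known that $\beta_0$ is a finite negative number and that $R_\beta=\infty$ if and only if $\beta\le\beta_0$. $N_\alpha$ denotes the unique root in $(5,\infty)$ of the equation $\frac{N^2(N-4)^2}{16}=2(4+\alpha)(N-2)(N-4)$ (in the variable $N$). *)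

theory Defs
  imports "HOL-Analysis.Analysis"
begin

text \<open>Radial solution of the IVP  Delta^2 u = r^alpha e^u, u(0)=0, u'(0)=u'''(0)=0,
  Delta u(0)=beta in R^N, existing on all of [0,infinity), written in the standard
  integral form (w plays the role of the radial Laplacian of u):
  w(r) = beta + int_0^r s^(1-N) int_0^s t^(N-1) t^alpha e^(u t) dt ds,
  u(r) = int_0^r s^(1-N) int_0^s t^(N-1) w(t) dt ds.\<close>
definition global_radial_sol :: "nat \<Rightarrow> real \<Rightarrow> real \<Rightarrow> (real \<Rightarrow> real) \<Rightarrow> bool" where
  "global_radial_sol N \<alpha> \<beta> u \<longleftrightarrow>
     continuous_on {0..} u \<and> u 0 = 0 \<and>
     (\<exists>w. continuous_on {0..} w \<and> w 0 = \<beta> \<and>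
        (\<forall>r\<ge>0. ((\<lambda>s. s powr (1 - real N) *
                    integral {0..s} (\<lambda>t. t powr (real N - 1 + \<alpha>) * exp (u t)))
                 has_integral (w r - \<beta>)) {0..r}) \<and>
        (\<forall>r\<ge>0. ((\<lambda>s. s powr (1 - real N) *
                    integral {0..s} (\<lambda>t. t powr (real N - 1) * w t))
                 has_integral (u r)) {0..r}))"

definition beta0 :: "nat \<Rightarrow> real \<Rightarrow> real" where
  "beta0 N \<alpha> = Sup {\<beta>. \<exists>u. global_radial_sol N \<alpha> \<beta> u}"

definition N_alpha :: "real \<Rightarrow> real" where
  "N_alpha \<alpha> = (THE M::real. M > 5 \<and>
      M^2 * (M - 4)^2 / 16 = 2 * (4 + \<alpha>) * (M - 2) * (M - 4))"

end

theory Submission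
  imports Defs "HOL-Real_Asymp.Real_Asymp"
begin

text \<open>Put \<open>r = e\<^sup>t\<close>, \<open>C = 2(4 + \<alpha>)(N - 2)(N - 4)\<close> and \<open>Z(t) = u(e\<^sup>t) + (4 + \<alpha>) t - ln C\<close>, the
  distance of \<open>u\<close> from the singular solution \<open>-(4 + \<alpha>) ln r + ln C\<close>. The equation becomes the
  autonomous system \<open>Z' = P\<close>, \<open>P' = (2 - N) P + Q\<close>, \<open>Q' = 2 Q + S\<close>, \<open>S' = (4 - N) S + C (e\<^sup>Z - 1)\<close>,
  whose linearisation has real roots \<open>l\<^sub>1, l\<^sub>2, l\<^sub>3 < 0 < l\<^sub>4\<close> exactly when
  \<open>C \<le> N\<^sup>2(N - 4)\<^sup>2/16\<close>, i.e. when \<open>N \<ge> N\<^sub>\<alpha>\<close>. Factoring the linear part gives a cascade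
  \<open>z\<^sub>1 = Z' - l\<^sub>4 Z\<close>, \<open>z\<^sub>2 = z\<^sub>1' - l\<^sub>3 z\<^sub>1\<close>, \<open>z\<^sub>3 = z\<^sub>2' - l\<^sub>2 z\<^sub>2\<close> with \<open>z\<^sub>3' - l\<^sub>1 z\<^sub>3 = C (e\<^sup>Z - 1 - Z) \<ge> 0\<close>.
  Since everything grows at most linearly as \<open>t \<rightarrow> -\<infinity>\<close> (i.e. \<open>r \<rightarrow> 0\<close>), the stable equations
  force \<open>z\<^sub>3, z\<^sub>2, z\<^sub>1 \<ge> 0\<close>. A positive value of \<open>Z\<close> would then grow exponentially and
  afterwards satisfy \<open>Z(\<tau>) \<ge> Z(s) + K (\<tau> - s)\<^sup>4 Z(s)\<^sup>6\<close>, which blows up in finite time.\<close>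

section \<open>Linear differential inequalities\<close>

lemma DERIV_comparison:
  fixes f g f' g' :: "real \<Rightarrow> real"
  assumes "a \<le> b"
    and "\<And>x. a \<le> x \<Longrightarrow> x \<le> b \<Longrightarrow> (f has_real_derivative f' x) (at x)"
    and "\<And>x. a \<le> x \<Longrightarrow> x \<le> b \<Longrightarrow> (g has_real_derivative g' x) (at x)"
    and "\<And>x. a \<le> x \<Longrightarrow> x \<le> b \<Longrightarrow> g' x \<le> f' x"
    and "g a \<le> f a"
  shows "g b \<le> f b"
proof -
  have "(\<lambda>x. f x - g x) a \<le> (\<lambda>x. f x - g x) b"
  proof (rule DERIV_nonneg_imp_nondecreasing[OF assms(1)])
    fix x assume "a \<le> x" "x \<le> b"
    then show "\<exists>y. ((\<lambda>x. f x - g x) has_real_derivative y) (at x) \<and> 0 \<le> y"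
      using assms(2-4) by (intro exI[of _ "f' x - g' x"]) (auto intro!: DERIV_diff)
  qed
  then show ?thesis using assms(5) by simp
qed

lemma integrating_factor_mono:
  fixes g h :: "real \<Rightarrow> real"
  assumes "x \<le> y"
    and "\<And>t. x \<le> t \<Longrightarrow> t \<le> y \<Longrightarrow> (g has_real_derivative l * g t + h t) (at t)"
    and "\<And>t. x \<le> t \<Longrightarrow> t \<le> y \<Longrightarrow> 0 \<le> h t"
  shows "exp (-l*x) * g x \<le> exp (-l*y) * g y"
proof (rule DERIV_comparison[where f = "\<lambda>t. exp (-l*t) * g t" and g = "\<lambda>_. exp (-l*x) * g x"
      and f' = "\<lambda>t. exp (-l*t) * h t" and g' = "\<lambda>_. 0"])
  fix t assume t: "x \<le> t" "t \<le> y"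
  show "((\<lambda>t. exp (-l*t) * g t) has_real_derivative exp (-l*t) * h t) (at t)"
    by (rule derivative_eq_intros assms(2)[OF t] refl)+ (simp add: algebra_simps)
  show "0 \<le> exp (-l*t) * h t" using assms(3)[OF t] by simp
qed (use assms(1) in auto)

text \<open>A negative value \<open>g(t)\<close> propagates backwards as \<open>g(y) \<le> -\<delta> e\<^sup>l\<^sup>y\<close> for \<open>y \<le> t\<close>,
  which grows exponentially as \<open>y \<rightarrow> -\<infinity>\<close>.\<close>
lemma linear_ode_nonneg_if_bigo_at_bot:
  fixes g h :: "real \<Rightarrow> real"
  assumes l: "l < 0"
    and deriv: "\<And>t. (g has_real_derivative l * g t + h t) (at t)"
    and forcing: "\<And>t. 0 \<le> h t"
    and growth: "g \<in> O[at_bot](\<lambda>t. t)"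
  shows "0 \<le> g t"
proof (rule ccontr)
  assume "\<not> 0 \<le> g t"
  define \<delta> where "\<delta> = - exp (-l*t) * g t"
  have \<delta>: "0 < \<delta>" using \<open>\<not> 0 \<le> g t\<close> by (simp add: \<delta>_def mult_pos_neg)
  have "eventually (\<lambda>y. norm (exp (l*y)) \<le> (1/\<delta>) * norm (g y)) at_bot"
    unfolding eventually_at_bot_linorder
  proof (intro exI allI impI)
    fix y assume "y \<le> t"
    then have weighted: "exp (-l*y) * g y \<le> - \<delta>"
      using integrating_factor_mono[of y t g l h] deriv forcing by (simp add: \<delta>_def)
    have "g y = exp (l*y) * (exp (-l*y) * g y)"
      by (simp add: mult.assoc[symmetric] flip: exp_add)
    also have "\<dots> \<le> exp (l*y) * (- \<delta>)"
      using weighted by (intro mult_left_mono) auto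
    finally have "\<delta> * exp (l*y) \<le> norm (g y)" by (simp add: mult.commute)
    then show "norm (exp (l*y)) \<le> (1/\<delta>) * norm (g y)"
      using \<delta> by (simp add: field_simps)
  qed
  then have "(\<lambda>y. exp (l*y)) \<in> O[at_bot](g)" by (rule bigoI)
  moreover have "g \<in> o[at_bot](\<lambda>y. exp (l*y))"
    using growth by (rule landau_o.big_small_trans) (use l in real_asymp)
  ultimately have "eventually (\<lambda>y. exp (l*y) = 0) at_bot"
    by (rule landau_o.big_small_asymmetric)
  then show False by simp
qed

lemma linear_ode_power_lower_bound:
  fixes g h :: "real \<Rightarrow> real" and n :: nat
  assumes l: "l < 0"
    and deriv: "\<And>t. (g has_real_derivative l * g t + h t) (at t)"
    and start: "0 \<le> g s" and c: "0 \<le> c"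
    and forcing: "\<And>t. s \<le> t \<Longrightarrow> t \<le> s + 1 \<Longrightarrow> c * (t - s)^n \<le> h t"
    and t: "s \<le> t" "t \<le> s + 1"
  shows "exp l * c * (t - s)^Suc n / Suc n \<le> g t"
proof -
  define \<psi> where "\<psi> \<tau> = exp (-l*(\<tau> - s)) * g \<tau>" for \<tau>
  define \<phi> where "\<phi> \<tau> = c / Suc n * (\<tau> - s)^Suc n" for \<tau>
  have "\<phi> t \<le> \<psi> t"
  proof (rule DERIV_comparison[OF t(1)])
    fix x assume x: "s \<le> x" "x \<le> t"
    show "(\<psi> has_real_derivative exp (-l*(x - s)) * h x) (at x)"
      unfolding \<psi>_def by (rule derivative_eq_intros deriv refl)+ (simp add: algebra_simps)
    show "(\<phi> has_real_derivative c * (x - s)^n) (at x)"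
      unfolding \<phi>_def by (rule derivative_eq_intros refl)+ (simp del: of_nat_Suc)
    have "1 \<le> exp (-l*(x - s))" using l x by (simp add: mult_nonpos_nonneg)
    moreover have "0 \<le> c * (x - s)^n" "c * (x - s)^n \<le> h x"
      using c x t forcing by auto
    ultimately show "c * (x - s)^n \<le> exp (-l*(x - s)) * h x"
      using mult_right_mono[of 1 "exp (-l*(x - s))" "h x"] by linarith
  qed (simp add: \<phi>_def \<psi>_def start)
  moreover have "exp l \<le> exp (l*(t - s))"
    using l t by (simp add: mult_le_cancel_left_neg)
  moreover have "0 \<le> \<phi> t" using c t by (simp add: \<phi>_def)
  ultimately have "exp l * \<phi> t \<le> exp (l*(t - s)) * \<psi> t"
    by (intro mult_mono) auto
  also have "exp (l*(t - s)) * \<psi> t = g t"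
    by (simp add: \<psi>_def mult.assoc[symmetric] flip: exp_add)
  finally show ?thesis by (simp add: \<phi>_def)
qed

text \<open>Once \<open>z \<ge> 2\<^sup>k z(t\<^sub>0)\<close>, a step of length \<open>D/(2\<^sup>k z(t\<^sub>0))\<close> doubles \<open>z\<close>; these steps
  add up to at most 2.\<close>
lemma sextic_growth_blowup:
  fixes z :: "real \<Rightarrow> real"
  assumes K: "0 < K" and start: "1 + 1/K \<le> z t0"
    and mono: "\<And>s t. t0 \<le> s \<Longrightarrow> s \<le> t \<Longrightarrow> z s \<le> z t"
    and grow: "\<And>s t. t0 \<le> s \<Longrightarrow> s \<le> t \<Longrightarrow> t \<le> s + 1 \<Longrightarrow> z s + K * (t - s)^4 * z s ^ 6 \<le> z t"
  shows False
proof -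
  define D where "D = 1 + 1/K"
  define Z0 where "Z0 = z t0"
  define step where "step k = D / Z0 * (1/2)^k" for k :: nat
  define tk where "tk k = t0 + 2 * D / Z0 * (1 - (1/2)^k)" for k :: nat
  have D: "1 \<le> D" "D \<le> Z0" "K * D = K + 1"
    using K start by (auto simp: D_def Z0_def field_simps)
  have DZ: "0 < D / Z0" "D / Z0 \<le> 1" using D by auto
  have tk_ge: "t0 \<le> tk k" for k
  proof -
    have "0 \<le> 2 * D / Z0 * (1 - (1/2::real)^k)"
      using DZ by (intro mult_nonneg_nonneg) (auto simp: power_le_one)
    then show ?thesis by (simp add: tk_def)
  qed
  have tk_le: "tk k \<le> t0 + 2" for k
  proof -
    have "D / Z0 * (1 - (1/2::real)^k) \<le> 1"
      using DZ by (intro mult_le_one) (auto simp: power_le_one)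
    then show ?thesis by (simp add: tk_def)
  qed
  have tk_Suc: "tk (Suc k) = tk k + step k" for k
    by (simp add: tk_def step_def algebra_simps)
  have doubling: "2^k * Z0 \<le> z (tk k)" for k
  proof (induction k)
    case 0
    then show ?case by (simp add: tk_def Z0_def)
  next
    case (Suc k)
    define s where "s = tk k"
    define h where "h = step k"
    have h: "0 < h" "h \<le> 1"
      unfolding h_def step_def using DZ by (intro mult_pos_pos mult_le_one; simp add: power_le_one)+
    have zs: "2^k * Z0 \<le> z s" using Suc by (simp add: s_def)
    have "1 * 1 \<le> (2::real)^k * Z0" using D by (intro mult_mono) auto
    with zs have zs1: "1 \<le> z s" by linarith
    have "D = h * (2^k * Z0)" using D by (simp add: h_def step_def power_one_over)
    also have "\<dots> \<le> h * z s" using zs h by (intro mult_left_mono) auto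
    finally have hz: "D \<le> h * z s" .
    have "h * z s \<le> (h * z s)^4" using power_increasing[of 1 4 "h * z s"] hz D by simp
    with hz have hz4: "D \<le> (h * z s)^4" by linarith
    have "z s \<le> (K * D) * z s" using D K zs1 by simp
    also have "\<dots> \<le> K * (h * z s)^4 * z s^2"
    proof (rule mult_mono)
      show "K * D \<le> K * (h * z s)^4" using hz4 K by simp
      show "z s \<le> z s^2" using zs1 by (simp add: power2_eq_square)
    qed (use K zs1 in auto)
    also have "\<dots> = K * h^4 * z s^6" by (simp add: power_mult_distrib eval_nat_numeral)
    finally have "2 * z s \<le> z (s + h)"
      using grow[of s "s + h"] h tk_ge[of k] by (simp add: s_def)
    then show ?case using zs by (simp add: tk_Suc s_def h_def)
  qed
  obtain k where "z (t0 + 2) < 2^k" using real_arch_pow[of 2 "z (t0 + 2)"] by auto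
  moreover have "z (tk k) \<le> z (t0 + 2)" using mono tk_ge tk_le by blast
  moreover have "(2::real)^k \<le> 2^k * Z0" using D by simp
  ultimately show False using doubling[of k] by linarith
qed

section \<open>A stable cascade forced by \<open>e\<^sup>Z - 1 - Z\<close>\<close>

lemma power6_le_exp_minus_linear:
  fixes x :: real
  assumes "0 \<le> x"
  shows "x^6 / 6^6 \<le> exp x - 1 - x"
proof -
  define y where "y = x/6"
  have y: "0 \<le> y" using assms by (simp add: y_def)
  have "(1 + y)^6 \<le> (exp y)^6" using y by (intro power_mono) auto
  also have "(exp y)^6 = exp x" by (simp add: y_def flip: exp_of_nat_mult)
  finally have "(1 + y)^6 \<le> exp x" .
  moreover have "(1 + y)^6 = 1 + 6*y + y^6 + (15*y^2 + 20*y^3 + 15*y^4 + 6*y^5)"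
    by (simp add: eval_nat_numeral algebra_simps)
  moreover have "0 \<le> 15*y^2 + 20*y^3 + 15*y^4 + 6*y^5" using y by simp
  ultimately show ?thesis by (simp add: y_def power_divide)
qed


locale exp_forced_cascade =
  fixes Z z1 z2 z3 :: "real \<Rightarrow> real" and l1 l2 l3 l4 C :: real
  assumes neg_rates: "l1 < 0" "l2 < 0" "l3 < 0" and pos_rate: "0 < l4" and C_pos: "0 < C"
    and deriv_Z: "\<And>t. (Z has_real_derivative l4 * Z t + z1 t) (at t)"
    and deriv_z1: "\<And>t. (z1 has_real_derivative l3 * z1 t + z2 t) (at t)"
    and deriv_z2: "\<And>t. (z2 has_real_derivative l2 * z2 t + z3 t) (at t)"
    and deriv_z3: "\<And>t. (z3 has_real_derivative l1 * z3 t + C * (exp (Z t) - 1 - Z t)) (at t)"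
    and growth: "z1 \<in> O[at_bot](\<lambda>t. t)" "z2 \<in> O[at_bot](\<lambda>t. t)" "z3 \<in> O[at_bot](\<lambda>t. t)"
begin

lemma forcing_nonneg: "0 \<le> C * (exp (Z t) - 1 - Z t)"
proof -
  have "0 \<le> exp (Z t) - 1 - Z t" using exp_ge_add_one_self[of "Z t"] by linarith
  then show ?thesis using C_pos by simp
qed

lemma z3_nonneg: "0 \<le> z3 t"
  by (rule linear_ode_nonneg_if_bigo_at_bot[OF neg_rates(1) deriv_z3 forcing_nonneg growth(3)])

lemma z2_nonneg: "0 \<le> z2 t"
  by (rule linear_ode_nonneg_if_bigo_at_bot[OF neg_rates(2) deriv_z2 z3_nonneg growth(2)])

lemma z1_nonneg: "0 \<le> z1 t"
  by (rule linear_ode_nonneg_if_bigo_at_bot[OF neg_rates(3) deriv_z1 z2_nonneg growth(1)])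

lemma Z_exp_growth:
  assumes "t \<le> \<tau>"
  shows "exp (l4 * (\<tau> - t)) * Z t \<le> Z \<tau>"
proof -
  have "exp (-l4*t) * Z t \<le> exp (-l4*\<tau>) * Z \<tau>"
    by (rule integrating_factor_mono) (use assms deriv_Z z1_nonneg in auto)
  have "exp (l4 * (\<tau> - t)) * Z t = exp (l4*\<tau>) * (exp (-l4*t) * Z t)"
    by (simp add: mult.assoc[symmetric] right_diff_distrib flip: exp_add)
  also have "\<dots> \<le> exp (l4*\<tau>) * (exp (-l4*\<tau>) * Z \<tau>)"
    using \<open>exp (-l4*t) * Z t \<le> exp (-l4*\<tau>) * Z \<tau>\<close> by (rule mult_left_mono) simp
  also have "\<dots> = Z \<tau>"
    by (simp add: mult.assoc[symmetric] flip: exp_add)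
  finally show ?thesis .
qed

lemma Z_mono_after_pos:
  assumes "0 < Z t" "t \<le> a" "a \<le> b"
  shows "Z a \<le> Z b"
proof (rule DERIV_nonneg_imp_nondecreasing[OF assms(3)])
  fix x assume "a \<le> x" "x \<le> b"
  then have "0 < exp (l4 * (x - t)) * Z t" "exp (l4 * (x - t)) * Z t \<le> Z x"
    using assms Z_exp_growth[of t x] by auto
  then show "\<exists>y. (Z has_real_derivative y) (at x) \<and> 0 \<le> y"
    using deriv_Z[of x] z1_nonneg[of x] pos_rate by (intro exI[of _ "l4 * Z x + z1 x"]) auto
qed

lemma Z_quartic_growth:
  assumes pos: "0 < Z s" and mono: "\<And>x. s \<le> x \<Longrightarrow> Z s \<le> Z x"
    and \<tau>: "s \<le> \<tau>" "\<tau> \<le> s + 1"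
  shows "Z s + exp (l1 + l2 + l3) * C / (24 * 6^6) * (\<tau> - s)^4 * Z s ^ 6 \<le> Z \<tau>"
proof -
  define c0 where "c0 = C * Z s ^ 6 / 6^6"
  define c1 where "c1 = exp l1 * c0"
  define c2 where "c2 = exp l2 * c1 / 2"
  define c3 where "c3 = exp l3 * c2 / 3"
  have c: "0 \<le> c0" "0 \<le> c1" "0 \<le> c2" "0 \<le> c3"
    using C_pos pos by (simp_all add: c0_def c1_def c2_def c3_def)
  have forcing_ge: "c0 * (x - s)^0 \<le> C * (exp (Z x) - 1 - Z x)" if "s \<le> x" "x \<le> s + 1" for x
  proof -
    have "Z s ^ 6 / 6^6 \<le> Z x ^ 6 / 6^6"
      using mono[OF that(1)] pos by (intro divide_right_mono power_mono) auto
    also have "\<dots> \<le> exp (Z x) - 1 - Z x"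
      using mono[OF that(1)] pos by (intro power6_le_exp_minus_linear) auto
    finally show ?thesis using C_pos by (simp add: c0_def)
  qed
  have z3_ge: "c1 * (x - s)^1 \<le> z3 x" if "s \<le> x" "x \<le> s + 1" for x
    using linear_ode_power_lower_bound[OF neg_rates(1) deriv_z3 z3_nonneg c(1) forcing_ge that]
    by (simp add: c1_def)
  have z2_ge: "c2 * (x - s)^2 \<le> z2 x" if "s \<le> x" "x \<le> s + 1" for x
    using linear_ode_power_lower_bound[OF neg_rates(2) deriv_z2 z2_nonneg c(2) z3_ge that]
    by (simp add: c2_def power2_eq_square)
  have z1_ge: "c3 * (x - s)^3 \<le> z1 x" if "s \<le> x" "x \<le> s + 1" for x
    using linear_ode_power_lower_bound[OF neg_rates(3) deriv_z1 z1_nonneg c(3) z2_ge that]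
    by (simp add: c3_def)
  have "Z s + c3 / 4 * (\<tau> - s)^4 \<le> Z \<tau>"
  proof (rule DERIV_comparison[OF \<tau>(1)])
    fix x assume x: "s \<le> x" "x \<le> \<tau>"
    show "(Z has_real_derivative l4 * Z x + z1 x) (at x)" by (rule deriv_Z)
    show "((\<lambda>x. Z s + c3 / 4 * (x - s)^4) has_real_derivative c3 * (x - s)^3) (at x)"
      by (rule derivative_eq_intros refl)+ (simp add: eval_nat_numeral)
    have "0 \<le> l4 * Z x" using pos_rate pos mono[of x] x by simp
    then show "c3 * (x - s)^3 \<le> l4 * Z x + z1 x" using z1_ge[of x] x \<tau> by simp
  qed simp
  moreover have "c3 / 4 = exp (l1 + l2 + l3) * C / (24 * 6^6) * Z s ^ 6"
    by (simp add: c0_def c1_def c2_def c3_def exp_add)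
  ultimately show ?thesis by (simp add: mult.assoc mult.commute[of "Z s ^ 6"])
qed

theorem Z_nonpos: "Z t \<le> 0"
proof (rule ccontr)
  assume "\<not> Z t \<le> 0"
  then have Zt: "0 < Z t" by simp
  define K where "K = exp (l1 + l2 + l3) * C / (24 * 6^6)"
  have K: "0 < K" using C_pos by (simp add: K_def)
  define t0 where "t0 = t + (1 + 1/K) / (l4 * Z t)"
  have t0: "t \<le> t0" using Zt pos_rate K by (simp add: t0_def)
  have "l4 * (t0 - t) * Z t = 1 + 1/K" using Zt pos_rate by (simp add: t0_def)
  moreover have "(1 + l4 * (t0 - t)) * Z t = Z t + l4 * (t0 - t) * Z t"
    by (simp add: algebra_simps)
  moreover have "(1 + l4 * (t0 - t)) * Z t \<le> exp (l4 * (t0 - t)) * Z t"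
    using Zt by (intro mult_right_mono) auto
  moreover have "exp (l4 * (t0 - t)) * Z t \<le> Z t0" by (rule Z_exp_growth[OF t0])
  ultimately have start: "1 + 1/K \<le> Z t0" using Zt by linarith
  show False
  proof (rule sextic_growth_blowup[where z = Z, OF K start])
    show "Z s \<le> Z \<tau>" if "t0 \<le> s" "s \<le> \<tau>" for s \<tau>
      using Z_mono_after_pos[OF Zt] t0 that by simp
    show "Z s + K * (\<tau> - s)^4 * Z s ^ 6 \<le> Z \<tau>" if "t0 \<le> s" "s \<le> \<tau>" "\<tau> \<le> s + 1" for s \<tau>
    proof -
      have "0 < Z s" using start K Z_mono_after_pos[OF Zt, of t0 s] t0 that
        by (smt (verit) divide_pos_pos)
      then show ?thesis
        using Z_quartic_growth[of s \<tau>] Z_mono_after_pos[OF Zt] t0 that by (simp add: K_def)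
    qed
  qed
qed

end

section \<open>The Emden--Fowler system\<close>

text \<open>The linearisation of the system below at 0 has characteristic polynomial
  \<open>\<lambda>(\<lambda> - 2)(\<lambda> + N - 2)(\<lambda> + N - 4) - C\<close>; substituting \<open>\<lambda> = \<mu> - k\<close> with \<open>k = (N - 4)/2\<close>
  turns it into \<open>(\<mu>\<^sup>2 - k\<^sup>2)(\<mu>\<^sup>2 - N\<^sup>2/4) - C\<close>, a quadratic in \<open>\<mu>\<^sup>2\<close> with two real
  nonnegative roots exactly when \<open>C \<le> k\<^sup>2 N\<^sup>2/4\<close>.\<close>
lemma emden_fowler_char_roots:
  fixes N C :: real
  assumes N: "4 < N" and C: "0 < C" "C \<le> N^2 * (N - 4)^2 / 16"
  obtains l1 l2 l3 l4 where "l1 < 0" "l2 < 0" "l3 < 0" "0 < l4"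
    "l1 + l2 + l3 + l4 = -(2*N - 8)"
    "l1*l2 + l1*l3 + l1*l4 + l2*l3 + l2*l4 + l3*l4 = (N - 4)^2 - 2*(N - 2)"
    "l1*l2*l3 + l1*l2*l4 + l1*l3*l4 + l2*l3*l4 = 2*(N - 2)*(N - 4)"
    "l1*l2*l3*l4 = -C"
proof -
  define k a b where "k = (N - 4)/2" and "a = k^2" and "b = N^2/4"
  have k: "0 < k" using N by (simp add: k_def)
  have ab: "C \<le> a * b" using C by (simp add: a_def b_def k_def power_divide mult.commute)
  have ba: "0 < b - a" using N by (simp add: a_def b_def k_def power2_eq_square field_simps)
  define D where "D = (a - b)^2 + 4*C"
  have sD1: "b - a < sqrt D"
    using C ba by (simp add: D_def power2_commute real_less_rsqrt)
  have sD2: "sqrt D \<le> a + b"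
  proof -
    have "D \<le> (a + b)^2" using ab by (simp add: D_def power2_eq_square algebra_simps)
    then have "sqrt D \<le> sqrt ((a + b)^2)" by (rule real_sqrt_le_mono)
    moreover have "0 \<le> a" by (simp add: a_def)
    ultimately show ?thesis using ba by simp
  qed
  define X1 X2 where "X1 = (a + b + sqrt D)/2" and "X2 = (a + b - sqrt D)/2"
  have X: "a < X1" "0 \<le> X2" "X2 < a" using sD1 sD2 ba by (auto simp: X1_def X2_def)
  define \<sigma>1 \<sigma>2 where "\<sigma>1 = sqrt X1" and "\<sigma>2 = sqrt X2"
  have "sqrt a = k" using k by (simp add: a_def)
  then have \<sigma>: "k < \<sigma>1" "\<sigma>2 < k" "0 \<le> \<sigma>2"
    using X unfolding \<sigma>1_def \<sigma>2_def by (auto intro: real_sqrt_less_mono)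
  have \<sigma>_sq: "\<sigma>1^2 = X1" "\<sigma>2^2 = X2" using X \<open>sqrt a = k\<close> k by (auto simp: \<sigma>1_def \<sigma>2_def)
  have S: "\<sigma>1^2 + \<sigma>2^2 = k^2 + N^2/4"
    by (simp add: \<sigma>_sq X1_def X2_def a_def b_def field_simps)
  have "0 \<le> D" using C by (simp add: D_def)
  then have "\<sigma>1^2 * \<sigma>2^2 = ((a + b)^2 - D) / 4"
    unfolding \<sigma>_sq X1_def X2_def by (simp add: power2_eq_square field_simps)
  also have "\<dots> = k^2 * N^2/4 - C" by (simp add: D_def a_def b_def power2_eq_square field_simps)
  finally have P: "\<sigma>1^2 * \<sigma>2^2 = k^2 * N^2/4 - C" .
  show ?thesis
  proof (rule that[of "-k - \<sigma>1" "-k - \<sigma>2" "\<sigma>2 - k" "\<sigma>1 - k"])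
    show "-k - \<sigma>1 < 0" "-k - \<sigma>2 < 0" "\<sigma>2 - k < 0" "0 < \<sigma>1 - k" using k \<sigma> by auto
    have "(-k - \<sigma>1) * (-k - \<sigma>2) * (\<sigma>2 - k) + (-k - \<sigma>1) * (-k - \<sigma>2) * (\<sigma>1 - k)
        + (-k - \<sigma>1) * (\<sigma>2 - k) * (\<sigma>1 - k) + (-k - \<sigma>2) * (\<sigma>2 - k) * (\<sigma>1 - k)
        = -2 * k * (2 * k^2 - (\<sigma>1^2 + \<sigma>2^2))"
      by (simp add: power2_eq_square algebra_simps)
    also have "\<dots> = -2 * k * (k^2 - N^2/4)" unfolding S by simp
    also have "\<dots> = 2 * (N - 2) * (N - 4)" by (simp add: k_def power2_eq_square field_simps)
    finally show "(-k - \<sigma>1) * (-k - \<sigma>2) * (\<sigma>2 - k) + (-k - \<sigma>1) * (-k - \<sigma>2) * (\<sigma>1 - k)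
        + (-k - \<sigma>1) * (\<sigma>2 - k) * (\<sigma>1 - k) + (-k - \<sigma>2) * (\<sigma>2 - k) * (\<sigma>1 - k)
        = 2 * (N - 2) * (N - 4)" .
    have "(-k - \<sigma>1) * (-k - \<sigma>2) * (\<sigma>2 - k) * (\<sigma>1 - k)
        = k^2 * k^2 - k^2 * (\<sigma>1^2 + \<sigma>2^2) + \<sigma>1^2 * \<sigma>2^2"
      by (simp add: power2_eq_square algebra_simps)
    also have "\<dots> = -C" unfolding S P by (simp add: field_simps)
    finally show "(-k - \<sigma>1) * (-k - \<sigma>2) * (\<sigma>2 - k) * (\<sigma>1 - k) = -C" .
  qed (use S k_def in algebra)+
qed

lemma emden_fowler_system_nonpos:
  fixes Z P Q S :: "real \<Rightarrow> real" and N C :: real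
  assumes N: "4 < N" and C: "0 < C" "C \<le> N^2 * (N - 4)^2 / 16"
    and dZ: "\<And>t. (Z has_real_derivative P t) (at t)"
    and dP: "\<And>t. (P has_real_derivative (2 - N) * P t + Q t) (at t)"
    and dQ: "\<And>t. (Q has_real_derivative 2 * Q t + S t) (at t)"
    and dS: "\<And>t. (S has_real_derivative (4 - N) * S t + C * (exp (Z t) - 1)) (at t)"
    and growth: "Z \<in> O[at_bot](\<lambda>t. t)" "P \<in> O[at_bot](\<lambda>t. t)"
      "Q \<in> O[at_bot](\<lambda>t. t)" "S \<in> O[at_bot](\<lambda>t. t)"
  shows "Z t \<le> 0"
proof -
  obtain l1 l2 l3 l4 where l: "l1 < 0" "l2 < 0" "l3 < 0" "0 < l4"
    and vieta: "l1 + l2 + l3 + l4 = -(2*N - 8)"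
      "l1*l2 + l1*l3 + l1*l4 + l2*l3 + l2*l4 + l3*l4 = (N - 4)^2 - 2*(N - 2)"
      "l1*l2*l3 + l1*l2*l4 + l1*l3*l4 + l2*l3*l4 = 2*(N - 2)*(N - 4)"
      "l1*l2*l3*l4 = -C"
    using emden_fowler_char_roots[OF N C] by blast
  \<comment> \<open>\<open>z\<^sub>1 = (D - l\<^sub>4) Z\<close>, \<open>z\<^sub>2 = (D - l\<^sub>3) z\<^sub>1\<close>, \<open>z\<^sub>3 = (D - l\<^sub>2) z\<^sub>2\<close> with \<open>D = d/dt\<close>, rewritten via the system\<close>
  define c where "c = 2 - N - l3 - l4"
  define z1 where "z1 \<tau> = P \<tau> - l4 * Z \<tau>" for \<tau>
  define z2 where "z2 \<tau> = Q \<tau> + c * P \<tau> + l3 * l4 * Z \<tau>" for \<tau>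
  define z3 where "z3 \<tau> = 2 * Q \<tau> + S \<tau> + c * ((2 - N) * P \<tau> + Q \<tau>) + l3 * l4 * P \<tau> - l2 * z2 \<tau>" for \<tau>
  interpret exp_forced_cascade Z z1 z2 z3 l1 l2 l3 l4 C
  proof
    show "(Z has_real_derivative l4 * Z t + z1 t) (at t)" for t
      using dZ[of t] by (simp add: z1_def)
    show "(z1 has_real_derivative l3 * z1 t + z2 t) (at t)" for t
      unfolding z1_def by (rule derivative_eq_intros dZ dP refl)+ (simp add: z2_def c_def algebra_simps)
    show "(z2 has_real_derivative l2 * z2 t + z3 t) (at t)" for t
      unfolding z2_def by (rule derivative_eq_intros dZ dP dQ refl)+ (simp add: z3_def z2_def c_def algebra_simps)
    show "(z3 has_real_derivative l1 * z3 t + C * (exp (Z t) - 1 - Z t)) (at t)" for t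
      unfolding z3_def z2_def
      by (rule derivative_eq_intros dZ dP dQ dS refl)+ (use vieta in \<open>unfold c_def, algebra\<close>)
    show "z1 \<in> O[at_bot](\<lambda>t. t)" "z2 \<in> O[at_bot](\<lambda>t. t)" "z3 \<in> O[at_bot](\<lambda>t. t)"
      unfolding z1_def z2_def z3_def using growth by (auto intro!: sum_in_bigo)
  qed (use l C in auto)
  show ?thesis by (rule Z_nonpos)
qed

section \<open>Radial integral operators in logarithmic variables\<close>

lemma integral_from_0_has_real_derivative:
  fixes g :: "real \<Rightarrow> real"
  assumes "continuous_on {0..} g" "0 < r"
  shows "((\<lambda>x. integral {0..x} g) has_real_derivative g r) (at r)"
proof -
  have "continuous_on {0..r+1} g" using assms(1) by (rule continuous_on_subset) auto
  then have "((\<lambda>x. integral {0..x} g) has_real_derivative g r) (at r within {0..r+1})"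
    using integral_has_real_derivative[of 0 "r+1" g r] assms(2) by simp
  moreover have "at r within {0..r+1} = at r"
    using at_within_interior[of r "{0..r+1}"] assms(2) by simp
  ultimately show ?thesis by simp
qed

lemma has_integral_from_0_has_real_derivative:
  fixes f F :: "real \<Rightarrow> real"
  assumes F: "\<And>r. 0 \<le> r \<Longrightarrow> (f has_integral F r) {0..r}" and r: "0 < r"
    and f: "continuous (at r) f"
  shows "(F has_real_derivative f r) (at r)"
proof -
  have "f integrable_on {0..r+1}" using F[of "r+1"] r by auto
  then have "((\<lambda>y. integral {0..y} f) has_vector_derivative f r) (at r within {0..r+1} - {})"
    by (rule integral_has_vector_derivative_continuous_at)
       (use r f in \<open>auto simp: continuous_at_imp_continuous_at_within\<close>)
  moreover have "at r within {0..r+1} - {} = at r"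
    using at_within_interior[of r "{0..r+1}"] r by simp
  ultimately have "((\<lambda>y. integral {0..y} f) has_real_derivative f r) (at r)"
    by (simp add: has_real_derivative_iff_has_vector_derivative)
  then show ?thesis
    by (rule has_field_derivative_transform_within_open[of _ _ _ "{0<..}"])
       (use r F in \<open>auto intro: integral_unique\<close>)
qed

lemma radial_integral_log_derivatives:
  fixes N a :: real and f F :: "real \<Rightarrow> real"
  defines "I \<equiv> \<lambda>r. integral {0..r} (\<lambda>t. t powr (N - 1 + a) * f t)"
  assumes p: "0 < N - 1 + a" and f: "continuous_on {0..} f"
    and F: "\<And>r. 0 \<le> r \<Longrightarrow> ((\<lambda>s. s powr (1 - N) * I s) has_integral F r) {0..r}"
  shows "((\<lambda>t. F (exp t)) has_real_derivative exp ((2 - N) * t) * I (exp t)) (at t)"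
    and "((\<lambda>t. exp ((2 - N) * t) * I (exp t)) has_real_derivative
           (2 - N) * (exp ((2 - N) * t) * I (exp t)) + exp ((2 + a) * t) * f (exp t)) (at t)"
proof -
  have "continuous_on {0..} (\<lambda>t. t powr (N - 1 + a) * f t)"
    using p by (intro continuous_intros continuous_on_powr' f) auto
  then have dI: "(I has_real_derivative r powr (N - 1 + a) * f r) (at r)" if "0 < r" for r
    unfolding I_def by (rule integral_from_0_has_real_derivative[OF _ that])
  have dF: "(F has_real_derivative r powr (1 - N) * I r) (at r)" if "0 < r" for r
  proof (rule has_integral_from_0_has_real_derivative[OF F that])
    show "continuous (at r) (\<lambda>s. s powr (1 - N) * I s)"
      using that DERIV_isCont[OF dI[OF that]] by (auto intro!: continuous_intros)
  qed
  have "((\<lambda>t. F (exp t)) has_real_derivative exp t powr (1 - N) * I (exp t) * exp t) (at t)"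
    by (rule DERIV_chain2[OF dF]) (auto intro: DERIV_exp)
  then show "((\<lambda>t. F (exp t)) has_real_derivative exp ((2 - N) * t) * I (exp t)) (at t)"
    by (simp add: exp_powr_real mult.assoc[symmetric] mult.commute[of _ "exp t"] flip: exp_add)
       (simp add: algebra_simps)
  have dIe: "((\<lambda>t. I (exp t)) has_real_derivative exp t powr (N - 1 + a) * f (exp t) * exp t) (at t)"
    by (rule DERIV_chain2[OF dI]) (auto intro: DERIV_exp)
  show "((\<lambda>t. exp ((2 - N) * t) * I (exp t)) has_real_derivative
           (2 - N) * (exp ((2 - N) * t) * I (exp t)) + exp ((2 + a) * t) * f (exp t)) (at t)"
    by (rule derivative_eq_intros dIe refl)+
       (simp add: exp_powr_real algebra_simps flip: exp_add)
qed

lemma bigo_1_comp_exp_at_bot: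
  fixes f :: "real \<Rightarrow> real"
  assumes "continuous_on {0..} f"
  shows "(\<lambda>t. f (exp t)) \<in> O[at_bot](\<lambda>_. 1)"
proof -
  obtain M where M: "\<And>x. x \<in> {0..1} \<Longrightarrow> norm (f x) \<le> M"
    using compact_Icc continuous_on_compact_bound continuous_on_subset[OF assms] by (metis atLeast_iff atLeastAtMost_iff subsetI)
  have "norm (f (exp t)) \<le> M * norm (1::real)" if "t \<le> 0" for t
    using M[of "exp t"] that by simp
  then show ?thesis
    by (intro bigoI[where c = M]) (auto simp: eventually_at_bot_linorder)
qed

lemma radial_integral_log_bigo:
  fixes N a :: real and f :: "real \<Rightarrow> real"
  defines "I \<equiv> \<lambda>r. integral {0..r} (\<lambda>t. t powr (N - 1 + a) * f t)"
  assumes p: "0 < N - 1 + a" and f: "continuous_on {0..} f"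
  shows "(\<lambda>t. exp ((2 - N) * t) * I (exp t)) \<in> O[at_bot](\<lambda>t. exp ((2 + a) * t))"
proof -
  obtain M where M: "\<And>x. x \<in> {0..1} \<Longrightarrow> \<bar>f x\<bar> \<le> M"
    using compact_Icc continuous_on_compact_bound continuous_on_subset[OF f]
    by (metis atLeast_iff atLeastAtMost_iff real_norm_def subsetI)
  have "\<bar>exp ((2 - N) * t) * I (exp t)\<bar> \<le> M * exp ((2 + a) * t)" if t: "t \<le> 0" for t
  proof -
    define r where "r = exp t"
    have r: "0 \<le> r" "r \<le> 1" using t by (auto simp: r_def)
    have "norm (I r) \<le> (r powr (N - 1 + a) * M) * (r - 0)"
      unfolding I_def
    proof (rule integral_bound[OF r(1)])
      show "continuous_on {0..r} (\<lambda>t. t powr (N - 1 + a) * f t)"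
        using p by (intro continuous_intros continuous_on_powr' continuous_on_subset[OF f]) auto
      fix x assume x: "x \<in> {0..r}"
      have "x powr (N - 1 + a) * \<bar>f x\<bar> \<le> r powr (N - 1 + a) * M"
        using x r p M[of x] by (intro mult_mono powr_mono2) auto
      then show "norm (x powr (N - 1 + a) * f x) \<le> r powr (N - 1 + a) * M"
        by (simp add: abs_mult)
    qed
    then have "\<bar>exp ((2 - N) * t) * I r\<bar> \<le> exp ((2 - N) * t) * (r powr (N - 1 + a) * M * r)"
      by (simp add: abs_mult mult_left_mono)
    also have "\<dots> = M * exp ((2 + a) * t)"
      by (simp add: r_def exp_powr_real algebra_simps flip: exp_add)
    finally show ?thesis by (simp add: r_def)
  qed
  then show ?thesis
    by (intro bigoI[where c = M]) (auto simp: eventually_at_bot_linorder intro!: exI[of _ 0])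
qed

lemma global_radial_sol_log_system:
  fixes n :: nat and \<alpha> \<beta> :: real and u :: "real \<Rightarrow> real"
  assumes sol: "global_radial_sol n \<alpha> \<beta> u" and \<alpha>: "-2 < \<alpha>" and n: "3 \<le> real n"
  obtains w G1 G2 :: "real \<Rightarrow> real" where
    "\<And>t. ((\<lambda>t. u (exp t)) has_real_derivative G1 t) (at t)"
    "\<And>t. (G1 has_real_derivative (2 - real n) * G1 t + exp (2 * t) * w (exp t)) (at t)"
    "\<And>t. ((\<lambda>t. w (exp t)) has_real_derivative G2 t) (at t)"
    "\<And>t. (G2 has_real_derivative (2 - real n) * G2 t + exp ((2 + \<alpha>) * t) * exp (u (exp t))) (at t)"
    "(\<lambda>t. u (exp t)) \<in> O[at_bot](\<lambda>_. 1)" "(\<lambda>t. w (exp t)) \<in> O[at_bot](\<lambda>_. 1)"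
    "G1 \<in> O[at_bot](\<lambda>t. exp (2 * t))" "G2 \<in> O[at_bot](\<lambda>t. exp ((2 + \<alpha>) * t))"
proof -
  define N where "N = real n"
  \<comment> \<open>the exponent \<open>N - 1 + 0\<close> matches \<open>radial_integral_log_derivatives\<close> with \<open>a = 0\<close>\<close>
  obtain w where u_cont: "continuous_on {0..} u" and w_cont: "continuous_on {0..} w"
    and w_int: "\<And>r. 0 \<le> r \<Longrightarrow> ((\<lambda>s. s powr (1 - N) *
          integral {0..s} (\<lambda>t. t powr (N - 1 + \<alpha>) * exp (u t))) has_integral (w r - \<beta>)) {0..r}"
    and u_int: "\<And>r. 0 \<le> r \<Longrightarrow> ((\<lambda>s. s powr (1 - N) *
          integral {0..s} (\<lambda>t. t powr (N - 1 + 0) * w t)) has_integral u r) {0..r}"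
    using sol unfolding global_radial_sol_def N_def by auto
  have expu_cont: "continuous_on {0..} (\<lambda>t. exp (u t))"
    by (rule continuous_on_compose2[OF continuous_on_exp u_cont]) auto
  have pos: "0 < N - 1 + 0" "0 < N - 1 + \<alpha>" using n \<alpha> by (auto simp: N_def)
  define G1 where "G1 = (\<lambda>t. exp ((2 - N) * t) * integral {0..exp t} (\<lambda>s. s powr (N - 1 + 0) * w s))"
  define G2 where "G2 = (\<lambda>t. exp ((2 - N) * t) * integral {0..exp t} (\<lambda>s. s powr (N - 1 + \<alpha>) * exp (u s)))"
  note d1 = radial_integral_log_derivatives[OF pos(1) w_cont u_int, folded G1_def]
  note d2 = radial_integral_log_derivatives[OF pos(2) expu_cont w_int, folded G2_def]
  show ?thesis
  proof (rule that[of G1 w G2, unfolded N_def[symmetric]])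
    show "((\<lambda>t. u (exp t)) has_real_derivative G1 t) (at t)" for t
      using d1(1) by (simp add: G1_def)
    show "(G1 has_real_derivative (2 - N) * G1 t + exp (2 * t) * w (exp t)) (at t)" for t
      using d1(2) by (simp add: G1_def)
    show "((\<lambda>t. w (exp t)) has_real_derivative G2 t) (at t)" for t
      using DERIV_add[OF d2(1)[of t] DERIV_const[of \<beta>]] by (simp add: G2_def)
    show "(G2 has_real_derivative (2 - N) * G2 t + exp ((2 + \<alpha>) * t) * exp (u (exp t))) (at t)" for t
      using d2(2) by (simp add: G2_def)
    show "(\<lambda>t. u (exp t)) \<in> O[at_bot](\<lambda>_. 1)" "(\<lambda>t. w (exp t)) \<in> O[at_bot](\<lambda>_. 1)"
      using u_cont w_cont by (auto intro: bigo_1_comp_exp_at_bot)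
    show "G1 \<in> O[at_bot](\<lambda>t. exp (2 * t))"
      using radial_integral_log_bigo[OF pos(1) w_cont] by (simp add: G1_def)
    show "G2 \<in> O[at_bot](\<lambda>t. exp ((2 + \<alpha>) * t))"
      using radial_integral_log_bigo[OF pos(2) expu_cont] by (simp add: G2_def)
  qed
qed

lemma global_radial_sol_upper_bound:
  fixes n :: nat and \<alpha> \<beta> r :: real and u :: "real \<Rightarrow> real"
  assumes sol: "global_radial_sol n \<alpha> \<beta> u" and \<alpha>: "-2 < \<alpha>" and n: "4 < real n"
    and C_le: "2 * (4 + \<alpha>) * (real n - 2) * (real n - 4) \<le> (real n)^2 * (real n - 4)^2 / 16"
    and r: "0 < r"
  shows "u r \<le> - (4 + \<alpha>) * ln r + ln (2 * (4 + \<alpha>) * (real n - 2) * (real n - 4))"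
proof -
  define N C where "N = real n" and "C = 2 * (4 + \<alpha>) * (N - 2) * (N - 4)"
  have C_pos: "0 < C" unfolding C_def N_def using n \<alpha> by (intro mult_pos_pos) auto
  have "3 \<le> real n" using n by simp
  then obtain w G1 G2 where
    du: "\<And>t. ((\<lambda>t. u (exp t)) has_real_derivative G1 t) (at t)"
    and dG1: "\<And>t. (G1 has_real_derivative (2 - N) * G1 t + exp (2 * t) * w (exp t)) (at t)"
    and dw: "\<And>t. ((\<lambda>t. w (exp t)) has_real_derivative G2 t) (at t)"
    and dG2: "\<And>t. (G2 has_real_derivative (2 - N) * G2 t + exp ((2 + \<alpha>) * t) * exp (u (exp t))) (at t)"
    and u_bigo: "(\<lambda>t. u (exp t)) \<in> O[at_bot](\<lambda>_. 1)" and w_bigo: "(\<lambda>t. w (exp t)) \<in> O[at_bot](\<lambda>_. 1)"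
    and G1_bigo: "G1 \<in> O[at_bot](\<lambda>t. exp (2 * t))"
    and G2_bigo: "G2 \<in> O[at_bot](\<lambda>t. exp ((2 + \<alpha>) * t))"
    unfolding N_def using global_radial_sol_log_system[OF sol \<alpha>] by metis
  define Z where "Z t = u (exp t) + (4 + \<alpha>) * t - ln C" for t
  define P where "P t = G1 t + (4 + \<alpha>)" for t
  define Q where "Q t = exp (2 * t) * w (exp t) + (N - 2) * (4 + \<alpha>)" for t
  define S where "S t = exp (2 * t) * G2 t - 2 * (N - 2) * (4 + \<alpha>)" for t
  have lin: "(\<lambda>t. exp (c * t)) \<in> O[at_bot](\<lambda>t::real. t)" if "0 < c" for c :: real
    using that by real_asymp
  have one: "(\<lambda>_. 1) \<in> O[at_bot](\<lambda>t::real. t)" by real_asymp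
  have const: "(\<lambda>_. c) \<in> O[at_bot](\<lambda>t::real. t)" for c :: real
    using landau_o.big_trans[OF bigo_const one] .
  have "Z (ln r) \<le> 0"
  proof (rule emden_fowler_system_nonpos[where Z = Z and t = "ln r" and N = N and C = C and P = P and Q = Q and S = S])
    show "4 < N" "0 < C" "C \<le> N^2 * (N - 4)^2 / 16" using n C_pos C_le by (simp_all add: N_def C_def)
    show "(Z has_real_derivative P t) (at t)" for t
      unfolding Z_def[abs_def] P_def by (auto intro!: derivative_eq_intros du)
    show "(P has_real_derivative (2 - N) * P t + Q t) (at t)" for t
      unfolding P_def[abs_def] by (auto intro!: derivative_eq_intros dG1 simp: Q_def algebra_simps)
    show "(Q has_real_derivative 2 * Q t + S t) (at t)" for t
      unfolding Q_def[abs_def] by (auto intro!: derivative_eq_intros dw simp: S_def algebra_simps)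
    have "C * (exp (Z t) - 1) = exp ((4 + \<alpha>) * t) * exp (u (exp t)) - C" for t
      using C_pos by (simp add: Z_def exp_diff exp_add algebra_simps)
    then show "(S has_real_derivative (4 - N) * S t + C * (exp (Z t) - 1)) (at t)" for t
      unfolding S_def[abs_def] by (auto intro!: derivative_eq_intros dG2
          simp: C_def algebra_simps simp flip: exp_add)
    have "(\<lambda>t. (4 + \<alpha>) * t) \<in> O[at_bot](\<lambda>t. t)" by simp
    then show "Z \<in> O[at_bot](\<lambda>t. t)"
      unfolding Z_def[abs_def] by (intro sum_in_bigo const landau_o.big_trans[OF u_bigo one])
    show "P \<in> O[at_bot](\<lambda>t. t)"
      unfolding P_def[abs_def] by (intro sum_in_bigo const landau_o.big_trans[OF G1_bigo lin]) simp
    have "(\<lambda>t. exp (2 * t) * w (exp t)) \<in> O[at_bot](\<lambda>t. exp (2 * t) * 1)"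
      using landau_o.big.mult[OF landau_o.big_refl w_bigo] .
    then show "Q \<in> O[at_bot](\<lambda>t. t)"
      unfolding Q_def[abs_def] using lin[of 2] by (intro sum_in_bigo const) (auto intro: landau_o.big_trans)
    have "(\<lambda>t. exp (2 * t) * G2 t) \<in> O[at_bot](\<lambda>t. exp (2 * t) * exp ((2 + \<alpha>) * t))"
      using landau_o.big.mult[OF landau_o.big_refl G2_bigo] .
    also have "(\<lambda>t. exp (2 * t) * exp ((2 + \<alpha>) * t)) = (\<lambda>t. exp ((4 + \<alpha>) * t))"
      by (simp add: fun_eq_iff algebra_simps flip: exp_add)
    also have "\<dots> \<in> O[at_bot](\<lambda>t. t)" using lin \<alpha> by simp
    finally show "S \<in> O[at_bot](\<lambda>t. t)"
      unfolding S_def[abs_def] by (intro sum_in_bigo const)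
  qed
  then show ?thesis using r by (simp add: Z_def C_def N_def algebra_simps)
qed

lemma global_radial_sol_weighted_bound:
  fixes n :: nat and \<alpha> \<beta> r :: real and u :: "real \<Rightarrow> real"
  assumes sol: "global_radial_sol n \<alpha> \<beta> u" and \<alpha>: "-2 < \<alpha>" and n: "4 < real n"
    and C_le: "2 * (4 + \<alpha>) * (real n - 2) * (real n - 4) \<le> (real n)^2 * (real n - 4)^2 / 16"
    and r: "0 < r"
  shows "r powr \<alpha> * exp (u r) \<le> (real n)^2 * (real n - 4)^2 / (16 * r^4)"
proof -
  define C where "C = 2 * (4 + \<alpha>) * (real n - 2) * (real n - 4)"
  have "0 < C" unfolding C_def using n \<alpha> by (intro mult_pos_pos) auto
  have "exp (u r) \<le> exp (- (4 + \<alpha>) * ln r + ln C)"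
    using global_radial_sol_upper_bound[OF assms] by (simp add: C_def)
  also have "\<dots> = C * r powr (- (4 + \<alpha>))" using \<open>0 < C\<close> r by (simp add: exp_add powr_def)
  finally have "r powr \<alpha> * exp (u r) \<le> r powr \<alpha> * (C * r powr (- (4 + \<alpha>)))"
    by (rule mult_left_mono) simp
  also have "\<dots> = C * (r powr \<alpha> * r powr (- (4 + \<alpha>)))" by simp
  also have "r powr \<alpha> * r powr (- (4 + \<alpha>)) = 1 / r^4"
    using r by (simp add: powr_add[symmetric] powr_minus powr_realpow divide_inverse)
  also have "C * (1 / r^4) \<le> (real n)^2 * (real n - 4)^2 / 16 * (1 / r^4)"
    using C_le r by (intro mult_right_mono) (auto simp: C_def)
  finally show ?thesis by simp
qed


section \<open>The threshold dimension \<open>N\<^sub>\<alpha>\<close>\<close>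

definition N_alpha_cubic :: "real \<Rightarrow> real \<Rightarrow> real" where
  "N_alpha_cubic \<alpha> M = M^2 * (M - 4) / 16 - 2 * (4 + \<alpha>) * (M - 2)"

lemma N_alpha_equation_factor:
  "M^2 * (M - 4)^2 / 16 - 2 * (4 + \<alpha>) * (M - 2) * (M - 4) = (M - 4) * N_alpha_cubic \<alpha> M"
  by (simp add: N_alpha_cubic_def power2_eq_square algebra_simps)

lemma N_alpha_cubic_diff:
  "N_alpha_cubic \<alpha> M - N_alpha_cubic \<alpha> m
     = (M - m) * ((M^2 + M*m + m^2 - 4*(M + m)) / 16 - 2*(4 + \<alpha>))"
  by (simp add: N_alpha_cubic_def power2_eq_square field_simps)

text \<open>The cubic is negative at 5 and convex beyond, so it changes sign only once on \<open>(5,\<infinity>)\<close>.\<close>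
lemma N_alpha_cubic_pos_beyond_root:
  assumes \<alpha>: "-2 < \<alpha>" and m: "5 < m" "N_alpha_cubic \<alpha> m = 0" and "m < M"
  shows "0 < N_alpha_cubic \<alpha> M"
proof -
  have "N_alpha_cubic \<alpha> 5 < 0" using \<alpha> by (simp add: N_alpha_cubic_def)
  then have "0 < (m - 5) * ((m^2 + m*5 + 5^2 - 4*(m + 5)) / 16 - 2*(4 + \<alpha>))"
    using m N_alpha_cubic_diff[of \<alpha> m 5] by simp
  then have slope5: "0 < (m^2 + m*5 + 5^2 - 4*(m + 5)) / 16 - 2*(4 + \<alpha>)"
    using m by (simp add: zero_less_mult_iff)
  have "0 < (M - m) * (M + 2*m - 4) + (2*m + 1) * (m - 5)"
    using \<open>m < M\<close> m by (intro add_pos_pos mult_pos_pos) auto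
  then have "m^2 + m*5 + 5^2 - 4*(m + 5) < M^2 + M*m + m^2 - 4*(M + m)"
    by (simp add: power2_eq_square algebra_simps)
  with slope5 have "0 < (M^2 + M*m + m^2 - 4*(M + m)) / 16 - 2*(4 + \<alpha>)"
    by (smt (verit) divide_strict_right_mono)
  then show ?thesis using N_alpha_cubic_diff[of \<alpha> M m] m \<open>m < M\<close> by simp
qed

lemma N_alpha_cubic_root_exists:
  assumes \<alpha>: "-2 < \<alpha>"
  shows "\<exists>m>5. N_alpha_cubic \<alpha> m = 0"
proof -
  define M where "M = 8 + 64 * (4 + \<alpha>)"
  have M: "8 \<le> M" "64 * (4 + \<alpha>) \<le> M - 4" using \<alpha> by (auto simp: M_def)
  have "2 * (4 + \<alpha>) * (M - 2) \<le> 2 * (4 + \<alpha>) * (2 * M)"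
    using \<alpha> M by (intro mult_left_mono) auto
  also have "\<dots> = M * (64 * (4 + \<alpha>)) / 16" by simp
  also have "\<dots> \<le> M^2 * (M - 4) / 16"
    using \<alpha> M by (intro divide_right_mono mult_mono) (auto simp: power2_eq_square)
  finally have "0 \<le> N_alpha_cubic \<alpha> M" by (simp add: N_alpha_cubic_def)
  moreover have "N_alpha_cubic \<alpha> 5 < 0" using \<alpha> by (simp add: N_alpha_cubic_def)
  ultimately obtain m where "5 \<le> m" "m \<le> M" "N_alpha_cubic \<alpha> m = 0"
    using IVT'[of "N_alpha_cubic \<alpha>" 5 0 M] M
    by (force simp: N_alpha_cubic_def intro!: continuous_intros)
  moreover have "m \<noteq> 5" using \<open>N_alpha_cubic \<alpha> 5 < 0\<close> \<open>N_alpha_cubic \<alpha> m = 0\<close> by auto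
  ultimately show ?thesis by (intro exI[of _ m]) auto
qed

lemma N_alpha_root:
  assumes \<alpha>: "-2 < \<alpha>"
  shows "5 < N_alpha \<alpha>" "N_alpha_cubic \<alpha> (N_alpha \<alpha>) = 0"
proof -
  obtain m where m: "5 < m" "N_alpha_cubic \<alpha> m = 0"
    using N_alpha_cubic_root_exists[OF \<alpha>] by blast
  have equation_iff: "(M^2 * (M - 4)^2 / 16 = 2 * (4 + \<alpha>) * (M - 2) * (M - 4))
      \<longleftrightarrow> N_alpha_cubic \<alpha> M = 0" if "5 < M" for M
    using N_alpha_equation_factor[of M \<alpha>] that by (auto simp: right_diff_distrib[symmetric])
  have "N_alpha \<alpha> = m"
    unfolding N_alpha_def
  proof (rule the_equality)
    fix M assume "5 < M \<and> M^2 * (M - 4)^2 / 16 = 2 * (4 + \<alpha>) * (M - 2) * (M - 4)"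
    then have "5 < M" "N_alpha_cubic \<alpha> M = 0" using equation_iff by auto
    then show "M = m"
      using N_alpha_cubic_pos_beyond_root[OF \<alpha>] m by (metis less_irrefl linorder_neqE_linordered_idom)
  qed (use m equation_iff in auto)
  then show "5 < N_alpha \<alpha>" "N_alpha_cubic \<alpha> (N_alpha \<alpha>) = 0" using m by simp_all
qed

lemma N_alpha_leD:
  assumes \<alpha>: "-2 < \<alpha>" and N: "N_alpha \<alpha> \<le> N"
  shows "5 < N" "2 * (4 + \<alpha>) * (N - 2) * (N - 4) \<le> N^2 * (N - 4)^2 / 16"
proof -
  show "5 < N" using N_alpha_root(1)[OF \<alpha>] N by simp
  have "0 \<le> N_alpha_cubic \<alpha> N"
    using N_alpha_root[OF \<alpha>] N N_alpha_cubic_pos_beyond_root[OF \<alpha>, of "N_alpha \<alpha>" N]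
    by (cases "N = N_alpha \<alpha>") auto
  then have "0 \<le> (N - 4) * N_alpha_cubic \<alpha> N" using \<open>5 < N\<close> by simp
  then show "2 * (4 + \<alpha>) * (N - 2) * (N - 4) \<le> N^2 * (N - 4)^2 / 16"
    using N_alpha_equation_factor[of N \<alpha>] by linarith
qed

theorem mainTheorem12:
  fixes \<alpha> :: real
  assumes "\<alpha> > -2"
    and "real CARD('n) \<ge> N_alpha \<alpha>"
  shows "(\<forall>u. global_radial_sol CARD('n) \<alpha> (beta0 CARD('n) \<alpha>) u \<longrightarrow>
           (\<forall>r>0. u r \<le> - (4 + \<alpha>) * ln r
                    + ln (2 * (4 + \<alpha>) * (real CARD('n) - 2) * (real CARD('n) - 4))))
       \<and> (\<forall>\<beta> \<le> beta0 CARD('n) \<alpha>. \<forall>u. global_radial_sol CARD('n) \<alpha> \<beta> u \<longrightarrow>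
           (\<forall>x::real^'n. x \<noteq> 0 \<longrightarrow>
              norm x powr \<alpha> * exp (u (norm x))
                \<le> (real CARD('n))^2 * (real CARD('n) - 4)^2 / (16 * norm x ^ 4)))"
proof -
  have N: "4 < real CARD('n)"
    and C_le: "2 * (4 + \<alpha>) * (real CARD('n) - 2) * (real CARD('n) - 4)
                 \<le> (real CARD('n))^2 * (real CARD('n) - 4)^2 / 16"
    using N_alpha_leD[OF assms] by auto
  show ?thesis
    using global_radial_sol_upper_bound[OF _ assms(1) N C_le]
      global_radial_sol_weighted_bound[OF _ assms(1) N C_le] by auto
qed

end
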